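(* Let $x,y$ be non-commuting indeterminates and $C=xyx^{-1}y^{-1}$. Let $(R_n)_{n\in\mathbb Z}$ satisfy $$R_{2n}CR_{2n-2}=1+R_{2n-1},\qquad R_{2n+1}CR_{2n-1}=1+R_{2n}^4\qquad(n\in\mathbb Z),$$ with $R_0=yxy^{-1}$ and $R_1=y$. Then for all $n\ge0$, $u_n=R_{2n}$ is a Laurent polynomial in $x,y$ with only non-negative integer coefficients.
   Context: Work in the free skew field (non-commutative rational functions) over $\mathbb C$ generated by $x,y$. A Laurent polynomial in $x,y$ is a $\mathbb Z$-linear combination of words in $x^{\pm1},y^{\pm1}$. *)

theory Defs
  imports Main
begin

datatype letter = X | Xinv | Y | Yinv

fun letter_eval :: "'a::division_ring \<Rightarrow> 'a \<Rightarrow> letter \<Rightarrow> 'a" where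
  "letter_eval x y X = x"
| "letter_eval x y Xinv = inverse x"
| "letter_eval x y Y = y"
| "letter_eval x y Yinv = inverse y"

definition word_eval :: "'a::division_ring \<Rightarrow> 'a \<Rightarrow> letter list \<Rightarrow> 'a" where
  "word_eval x y w = foldr (\<lambda>l acc. letter_eval x y l * acc) w 1"

fun inverse_letters :: "letter \<Rightarrow> letter \<Rightarrow> bool" where
  "inverse_letters X Xinv = True"
| "inverse_letters Xinv X = True"
| "inverse_letters Y Yinv = True"
| "inverse_letters Yinv Y = True"
| "inverse_letters _ _ = False"

text \<open>Freely reduced words = elements of the free group on x, y.\<close>
definition reduced_word :: "letter list \<Rightarrow> bool" where
  "reduced_word w = (\<forall>i. Suc i < length w \<longrightarrow> \<not> inverse_letters (w ! i) (w ! Suc i))"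

text \<open>x, y are invertible and the Laurent polynomials (integer group ring of the
  free group on x, y) embed into the division ring: no nontrivial integer linear
  combination of distinct reduced words vanishes.  The free skew field generated
  by x, y has this property.\<close>
definition free_laurent_embedding :: "'a::division_ring \<Rightarrow> 'a \<Rightarrow> bool" where
  "free_laurent_embedding x y =
     (x \<noteq> 0 \<and> y \<noteq> 0 \<and>
      (\<forall>c :: letter list \<Rightarrow> int.
          finite {w. c w \<noteq> 0} \<longrightarrow> (\<forall>w. c w \<noteq> 0 \<longrightarrow> reduced_word w) \<longrightarrow>
          (\<Sum>w\<in>{w. c w \<noteq> 0}. of_int (c w) * word_eval x y w) = 0 \<longrightarrow>
          (\<forall>w. c w = 0)))"

definition commutator :: "'a::division_ring \<Rightarrow> 'a \<Rightarrow> 'a" where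
  "commutator x y = x * y * inverse x * inverse y"

text \<open>r is a Laurent polynomial in x, y with non-negative integer coefficients:
  a finite sum of words (repetitions giving the multiplicities).\<close>
definition nonneg_laurent :: "'a::division_ring \<Rightarrow> 'a \<Rightarrow> 'a \<Rightarrow> bool" where
  "nonneg_laurent x y r = (\<exists>ws. r = sum_list (map (word_eval x y) ws))"

end

theory Submission
  imports Defs
begin

text \<open>Write \<open>u n = R (2n)\<close>, \<open>w n = R (2n+1)\<close> and \<open>C\<close> for the commutator. As long as the
  terms are invertible, the two recurrences propagate the quasi-commutation relations
  \<open>w n C u n = u n w n\<close> and \<open>u (n+1) C w n = w n u (n+1)\<close>, and with them the quantity
  \<open>K n = (C u n C u n + u (n+1)\<^sup>2) (w n)\<^sup>-\<^sup>1\<close> is conserved. So the even terms obey the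
  linear recurrence \<open>u (n+2) + C u n = K u (n+1)\<close> with \<open>K = (x\<^sup>2 + u 1\<^sup>2) y\<^sup>-\<^sup>1\<close>.
  This \<open>K\<close> splits as \<open>a + b + r\<close> into sums of words with \<open>b a = C\<close>, so writing
  \<open>u (n+1) = a u n + D n\<close> gives \<open>D (n+1) = r u (n+1) + b D n\<close>, and positivity of the
  coefficients propagates. Positivity in turn supplies the invertibility, since a nonempty
  sum of words cannot vanish when the Laurent polynomials embed.\<close>

lemma word_eval_Nil [simp]: "word_eval x y [] = 1"
  by (simp add: word_eval_def)

lemma word_eval_Cons [simp]: "word_eval x y (l # w) = letter_eval x y l * word_eval x y w"
  by (simp add: word_eval_def)

lemma word_eval_append: "word_eval x y (v @ w) = word_eval x y v * word_eval x y w"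
  by (induction v) (simp_all add: mult.assoc)

lemma reduced_word_Nil [simp]: "reduced_word []"
  and reduced_word_singleton [simp]: "reduced_word [l]"
  by (simp_all add: reduced_word_def)

lemma reduced_word_Cons_Cons [simp]:
  "reduced_word (l # m # w) \<longleftrightarrow> \<not> inverse_letters l m \<and> reduced_word (m # w)"
  unfolding reduced_word_def
  by (auto simp: nth_Cons split: nat.splits)

lemma reduced_word_ConsD: "reduced_word (l # w) \<Longrightarrow> reduced_word w"
  by (cases w) simp_all

fun free_reduce :: "letter list \<Rightarrow> letter list" where
  "free_reduce [] = []"
| "free_reduce (l # w) =
     (case free_reduce w of
        [] \<Rightarrow> [l]
      | m # v \<Rightarrow> if inverse_letters l m then v else l # m # v)"

lemma reduced_word_free_reduce: "reduced_word (free_reduce w)"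
  by (induction w) (auto split: list.split dest: reduced_word_ConsD)

lemma letter_eval_cancel:
  fixes x y :: "'a::division_ring"
  assumes "x \<noteq> 0" "y \<noteq> 0" "inverse_letters l m"
  shows "letter_eval x y l * (letter_eval x y m * z) = z"
  using assms by (cases l; cases m) (simp_all add: mult.assoc[symmetric])

lemma word_eval_free_reduce:
  fixes x y :: "'a::division_ring"
  assumes "x \<noteq> 0" "y \<noteq> 0"
  shows "word_eval x y (free_reduce w) = word_eval x y w"
proof (induction w)
  case (Cons l w)
  then show ?case
    using letter_eval_cancel[OF assms, of l] by (auto split: list.split) (metis word_eval_Cons)
qed simp

lemma sum_list_map_eq_sum_of_nat_count:
  fixes f :: "'b \<Rightarrow> 'a::semiring_1"
  shows "sum_list (map f xs) = (\<Sum>v\<in>set xs. of_nat (count_list xs v) * f v)"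
proof (induction xs)
  case (Cons a xs)
  have "(\<Sum>v\<in>set (a # xs). of_nat (count_list (a # xs) v) * f v)
      = (\<Sum>v\<in>set (a # xs). (if v = a then f v else 0) + of_nat (count_list xs v) * f v)"
    by (intro sum.cong) (auto simp: distrib_right)
  also have "\<dots> = f a + (\<Sum>v\<in>set (a # xs). of_nat (count_list xs v) * f v)"
    by (simp add: sum.distrib)
  also have "(\<Sum>v\<in>set (a # xs). of_nat (count_list xs v) * f v)
      = (\<Sum>v\<in>set xs. of_nat (count_list xs v) * f v)"
    by (rule sum.mono_neutral_right) auto
  finally show ?case by (simp add: Cons.IH)
qed simp

lemma free_laurent_embedding_nonzero:
  "free_laurent_embedding x y \<Longrightarrow> x \<noteq> 0 \<and> y \<noteq> 0"
  by (simp add: free_laurent_embedding_def)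

lemma free_laurent_embeddingD:
  assumes "free_laurent_embedding x y" "finite {w. c w \<noteq> 0}"
    "\<forall>w. c w \<noteq> 0 \<longrightarrow> reduced_word w"
    "(\<Sum>w\<in>{w. c w \<noteq> 0}. of_int (c w) * word_eval x y w) = 0"
  shows "c w = 0"
  using assms unfolding free_laurent_embedding_def by blast

text \<open>After free reduction, the multiplicities of the words give a vanishing combination of
  reduced words with positive coefficients.\<close>
lemma sum_words_nonzero:
  fixes x y :: "'a::division_ring"
  assumes emb: "free_laurent_embedding x y" and "ws \<noteq> []"
  shows "sum_list (map (word_eval x y) ws) \<noteq> 0"
proof
  assume sum_zero: "sum_list (map (word_eval x y) ws) = 0"
  define vs where "vs = map free_reduce ws"
  define c where "c w = int (count_list vs w)" for w
  have support: "{w. c w \<noteq> 0} = set vs"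
    by (simp add: c_def count_list_0_iff)
  have "sum_list (map (word_eval x y) vs) = sum_list (map (word_eval x y) ws)"
    using free_laurent_embedding_nonzero[OF emb]
    by (simp add: vs_def comp_def word_eval_free_reduce)
  then have vanishing: "(\<Sum>w\<in>{w. c w \<noteq> 0}. of_int (c w) * word_eval x y w) = 0"
    unfolding support sum_zero by (simp add: c_def sum_list_map_eq_sum_of_nat_count)
  have reduced: "\<forall>w. c w \<noteq> 0 \<longrightarrow> reduced_word w"
    by (auto simp: c_def count_list_0_iff vs_def reduced_word_free_reduce)
  have "c (hd vs) = 0"
    using free_laurent_embeddingD[OF emb _ reduced vanishing] support by simp
  moreover have "c (hd vs) \<noteq> 0"
    using \<open>ws \<noteq> []\<close> by (cases ws) (simp_all add: c_def vs_def)
  ultimately show False by blast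
qed

definition positive_laurent :: "'a::division_ring \<Rightarrow> 'a \<Rightarrow> 'a \<Rightarrow> bool" where
  "positive_laurent x y r \<longleftrightarrow> (\<exists>ws. ws \<noteq> [] \<and> r = sum_list (map (word_eval x y) ws))"

lemma positive_laurent_imp_nonneg_laurent:
  "positive_laurent x y r \<Longrightarrow> nonneg_laurent x y r"
  unfolding positive_laurent_def nonneg_laurent_def by blast

lemma positive_laurent_nonzero:
  "free_laurent_embedding x y \<Longrightarrow> positive_laurent x y r \<Longrightarrow> r \<noteq> 0"
  unfolding positive_laurent_def using sum_words_nonzero by auto

lemma positive_laurent_word: "positive_laurent x y (word_eval x y w)"
  unfolding positive_laurent_def by (rule exI[of _ "[w]"]) simp

lemma positive_laurent_one: "positive_laurent x y 1"
  using positive_laurent_word[of x y "[]"] by simp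

lemma positive_laurent_generators:
  "positive_laurent x y x" "positive_laurent x y y"
  "positive_laurent x y (inverse x)" "positive_laurent x y (inverse y)"
  using positive_laurent_word[of x y "[X]"] positive_laurent_word[of x y "[Y]"]
    positive_laurent_word[of x y "[Xinv]"] positive_laurent_word[of x y "[Yinv]"]
  by simp_all

lemma positive_laurent_add:
  assumes "positive_laurent x y r" "positive_laurent x y s"
  shows "positive_laurent x y (r + s)"
proof -
  obtain vs ws where "vs \<noteq> []" "r = sum_list (map (word_eval x y) vs)"
    "ws \<noteq> []" "s = sum_list (map (word_eval x y) ws)"
    using assms unfolding positive_laurent_def by blast
  then show ?thesis
    unfolding positive_laurent_def by (intro exI[of _ "vs @ ws"]) simp
qed

lemma sum_words_mult:
  "sum_list (map (word_eval x y) vs) * sum_list (map (word_eval x y) ws)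
   = sum_list (map (word_eval x y) [v @ w. v \<leftarrow> vs, w \<leftarrow> ws])"
  by (induction vs) (simp_all add: distrib_right sum_list_const_mult word_eval_append comp_def)

lemma positive_laurent_mult:
  assumes "positive_laurent x y r" "positive_laurent x y s"
  shows "positive_laurent x y (r * s)"
proof -
  obtain vs ws where "vs \<noteq> []" "r = sum_list (map (word_eval x y) vs)"
    "ws \<noteq> []" "s = sum_list (map (word_eval x y) ws)"
    using assms unfolding positive_laurent_def by blast
  then show ?thesis
    unfolding positive_laurent_def
    by (intro exI[of _ "[v @ w. v \<leftarrow> vs, w \<leftarrow> ws]"]) (auto simp: sum_words_mult neq_Nil_conv)
qed

lemma mult_inverse_cancel_left: "(a::'a::division_ring) \<noteq> 0 \<Longrightarrow> a * (inverse a * b) = b"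
  by (simp add: mult.assoc[symmetric])

lemma inverse_mult_cancel_left: "(a::'a::division_ring) \<noteq> 0 \<Longrightarrow> inverse a * (a * b) = b"
  by (simp add: mult.assoc[symmetric])

lemma power4_eq_mult: "(b::'a::monoid_mult) ^ 4 = b * b * b * b"
  by (simp add: eval_nat_numeral mult.assoc)

lemma eq_mult_inverse_if_mult_eq:
  fixes p c m g :: "'a::division_ring"
  assumes "c \<noteq> 0" "m \<noteq> 0" "p * c * m = g"
  shows "p = g * inverse m * inverse c"
  using assms by (auto simp: mult.assoc mult_inverse_cancel_left)

lemma quasi_commute_inverse:
  fixes c m k :: "'a::division_ring"
  assumes "c \<noteq> 0" "m \<noteq> 0" "k * c * m = m * k"
  shows "inverse m * k = k * inverse m * inverse c"
proof -
  have "inverse m * k = inverse m * (k * c * m) * inverse m * inverse c"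
    using assms(1,2) by (simp add: mult.assoc mult_inverse_cancel_left)
  also have "\<dots> = k * inverse m * inverse c"
    using assms by (simp add: mult.assoc inverse_mult_cancel_left)
  finally show ?thesis .
qed

lemma quasi_commute_step:
  fixes c m k p f :: "'a::division_ring"
  assumes c: "c \<noteq> 0" and m: "m \<noteq> 0" and quasi: "k * c * m = m * k"
    and rec: "p * c * m = 1 + f" and comm: "f * k = k * f"
  shows "p * c * k = k * p"
proof -
  have p: "p = (1 + f) * inverse m * inverse c"
    using eq_mult_inverse_if_mult_eq[OF c m rec] .
  have "p * c * k = (1 + f) * (inverse m * k)"
    using c by (simp add: p mult.assoc)
  also have "\<dots> = (1 + f) * k * inverse m * inverse c"
    by (simp add: quasi_commute_inverse[OF c m quasi] mult.assoc)
  also have "\<dots> = k * p"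
    using comm by (simp add: p algebra_simps)
  finally show ?thesis .
qed

text \<open>In the application \<open>a, b, d\<close> are three consecutive even terms, \<open>v, w\<close> the two odd
  terms between them and \<open>c\<close> the commutator.\<close>
context
  fixes a b c d v w :: "'a::division_ring"
  assumes c: "c \<noteq> 0" and b: "b \<noteq> 0" and v: "v \<noteq> 0"
    and rec_a: "b * c * a = 1 + v" and rec_d: "d * c * b = 1 + w" and rec_w: "w * c * v = 1 + b ^ 4"
    and quasi_v: "b * c * v = v * b"
begin

private lemma ca_eq: "c * a = inverse b * (1 + v)"
  using rec_a b by (metis inverse_mult_cancel_left mult.assoc)

private lemma w_eq: "w = (1 + b ^ 4) * inverse v * inverse c"
  using eq_mult_inverse_if_mult_eq[OF c v rec_w] .

private lemma d_eq: "d = (1 + w) * inverse b * inverse c"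
  using eq_mult_inverse_if_mult_eq[OF c b rec_d] .

lemma next_term_eq: "d + c * a = (c * a * (c * a) + b * b) * inverse v * b"
proof -
  have "c * a * b = inverse b * b + inverse b * (v * b)"
    by (simp add: ca_eq algebra_simps)
  also have "\<dots> = 1 + c * v"
    using b by (simp add: mult.assoc inverse_mult_cancel_left flip: quasi_v)
  finally have cab: "c * a * b = 1 + c * v" .
  have "inverse (b * c * v) = inverse (v * b)"
    by (simp add: quasi_v)
  then have vcb: "inverse v * inverse c * inverse b = inverse b * inverse v"
    using b c v by (simp add: nonzero_inverse_mult_distrib mult.assoc)
  have "d = inverse b * inverse c + (1 + b ^ 4) * (inverse v * inverse c * inverse b) * inverse c"
    by (simp add: d_eq w_eq algebra_simps)
  also have "\<dots> = inverse b * inverse c + (1 + b ^ 4) * inverse b * inverse v * inverse c"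
    by (simp only: vcb) (simp add: mult.assoc)
  also have "\<dots> = (inverse b * (1 + v) + b * b * b) * inverse v * inverse c"
    using b v by (simp add: power4_eq_mult algebra_simps mult_inverse_cancel_left)
  also have "\<dots> = (c * a + b * b * b) * inverse v * inverse c"
    by (simp only: ca_eq)
  also have "\<dots> = c * a * (1 + c * v) * inverse v * inverse c + b * b * b * inverse v * inverse c - c * a"
    using c v by (simp add: algebra_simps mult_inverse_cancel_left)
  also have "\<dots> = c * a * (c * a * b) * inverse v * inverse c + b * b * b * inverse v * inverse c - c * a"
    by (simp only: cab)
  also have "\<dots> = c * a * (c * a) * (inverse v * b) + b * b * (inverse v * b) - c * a"
    by (simp add: quasi_commute_inverse[OF c v quasi_v] mult.assoc)
  also have "\<dots> = (c * a * (c * a) + b * b) * inverse v * b - c * a"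
    by (simp add: algebra_simps)
  finally show ?thesis by simp
qed

lemma invariant_shift_eq:
  assumes quasi_w: "w * c * b = b * w"
  shows "(d + c * a) * inverse b * w = c * b * (c * b) + d * d"
proof -
  have wb: "inverse b * w = w * inverse b * inverse c"
    using quasi_commute_inverse[OF c b quasi_w] .
  have d_alt: "d = inverse b * inverse c + inverse b * w"
    by (simp add: d_eq algebra_simps wb[unfolded mult.assoc])
  have conj: "v * b * inverse v = b * c"
    using quasi_v v by (metis mult.assoc right_inverse mult_1_right)
  have "c * a * w - d = inverse b * (v * w - inverse c)"
    by (simp add: ca_eq d_alt algebra_simps)
  also have "v * w - inverse c
      = (v * b * inverse v) * (v * b * inverse v) * (v * b * inverse v) * (v * b * inverse v) * inverse c"
    using v by (simp add: w_eq power4_eq_mult algebra_simps mult_inverse_cancel_left inverse_mult_cancel_left)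
  finally have key: "c * a * w - d = c * b * (c * b) * (c * b)"
    using b c unfolding conj by (simp add: mult.assoc inverse_mult_cancel_left)
  have "d * w * inverse b * inverse c = d * (1 + w) * inverse b * inverse c - d * inverse b * inverse c"
    by (simp add: algebra_simps)
  also have "\<dots> = d * d - d * inverse b * inverse c"
    using b c unfolding rec_d[symmetric] by (simp add: mult.assoc mult_inverse_cancel_left)
  finally have dw: "d * w * inverse b * inverse c = d * d - d * inverse b * inverse c" .
  have "(d + c * a) * inverse b * w = d * w * inverse b * inverse c + c * a * w * inverse b * inverse c"
    by (simp add: mult.assoc wb algebra_simps)
  also have "\<dots> = d * d + (c * a * w - d) * inverse b * inverse c"
    using dw by (simp add: algebra_simps)
  also have "\<dots> = c * b * (c * b) + d * d"
    using key b c by (simp add: mult.assoc mult_inverse_cancel_left)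
  finally show ?thesis .
qed

end

locale nc_recurrence =
  fixes c :: "'a::division_ring" and u w :: "nat \<Rightarrow> 'a"
  assumes c_nonzero: "c \<noteq> 0"
    and rec_even: "\<And>n. u (Suc n) * c * u n = 1 + w n"
    and rec_odd: "\<And>n. w (Suc n) * c * w n = 1 + u (Suc n) ^ 4"
    and quasi_commute_0: "w 0 * c * u 0 = u 0 * w 0"
begin

lemma quasi_commute_Suc:
  assumes "u n \<noteq> 0" "w n * c * u n = u n * w n"
  shows "u (Suc n) * c * w n = w n * u (Suc n)"
  using quasi_commute_step[OF c_nonzero assms rec_even] by simp

lemma quasi_commute:
  assumes "\<forall>m<n. u m \<noteq> 0 \<and> w m \<noteq> 0"
  shows "w n * c * u n = u n * w n"
  using assms
proof (induction n)
  case (Suc n)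
  then have "u (Suc n) * c * w n = w n * u (Suc n)"
    by (intro quasi_commute_Suc) simp_all
  then show ?case
    using quasi_commute_step[OF c_nonzero _ _ rec_odd] Suc.prems by (simp add: power_commutes)
qed (simp add: quasi_commute_0)

definition invariant :: "nat \<Rightarrow> 'a" where
  "invariant n = (c * u n * (c * u n) + u (Suc n) * u (Suc n)) * inverse (w n)"

lemma invariant_step:
  assumes nonzero: "\<forall>m\<le>Suc n. u m \<noteq> 0 \<and> w m \<noteq> 0"
  shows "u (Suc (Suc n)) + c * u n = invariant n * u (Suc n)"
    and "invariant (Suc n) = invariant n"
proof -
  have quasi: "w n * c * u n = u n * w n" "w (Suc n) * c * u (Suc n) = u (Suc n) * w (Suc n)"
    using nonzero by (auto intro!: quasi_commute)
  have quasi_v: "u (Suc n) * c * w n = w n * u (Suc n)"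
    using nonzero quasi(1) by (intro quasi_commute_Suc) simp_all
  have u: "u (Suc n) \<noteq> 0" and v: "w n \<noteq> 0" and w: "w (Suc n) \<noteq> 0"
    using nonzero by auto
  note recs = c_nonzero u v rec_even[of n] rec_even[of "Suc n"] rec_odd[of n] quasi_v
  show next_term: "u (Suc (Suc n)) + c * u n = invariant n * u (Suc n)"
    unfolding invariant_def using next_term_eq[OF recs] .
  have "invariant (Suc n) = (u (Suc (Suc n)) + c * u n) * inverse (u (Suc n)) * w (Suc n) * inverse (w (Suc n))"
    unfolding invariant_def using invariant_shift_eq[OF recs quasi(2)] by simp
  also have "\<dots> = invariant n"
    using u w by (simp add: next_term mult.assoc)
  finally show "invariant (Suc n) = invariant n" .
qed

lemma invariant_eq_invariant_0:
  "\<forall>m\<le>n. u m \<noteq> 0 \<and> w m \<noteq> 0 \<Longrightarrow> invariant n = invariant 0"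
proof (induction n)
  case (Suc n)
  then show ?case using invariant_step(2)[of n] by simp
qed simp

lemma linear_recurrence:
  assumes "\<forall>m\<le>Suc n. u m \<noteq> 0 \<and> w m \<noteq> 0"
  shows "u (Suc (Suc n)) + c * u n = invariant 0 * u (Suc n)"
  using assms invariant_step(1)[OF assms] invariant_eq_invariant_0[of n] by simp

end

lemma split_linear_recurrence:
  fixes a b r :: "'a::ring"
  assumes "u2 + b * a * u0 = (a + b + r) * u1" and "u1 = a * u0 + D"
  shows "u2 = a * u1 + (r * u1 + b * D)"
proof -
  have "u2 = a * u1 + r * u1 + b * u1 - b * a * u0"
    using assms(1) by (simp add: algebra_simps eq_diff_eq)
  then show ?thesis
    using assms(2) by (simp add: algebra_simps)
qed

locale laurent_recurrence =
  fixes x y :: "'a::division_ring" and u w :: "nat \<Rightarrow> 'a"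
  assumes free: "free_laurent_embedding x y"
    and commutator_rec_even: "\<And>n. u (Suc n) * commutator x y * u n = 1 + w n"
    and commutator_rec_odd: "\<And>n. w (Suc n) * commutator x y * w n = 1 + u (Suc n) ^ 4"
    and u_0: "u 0 = y * x * inverse y" and w_0: "w 0 = y"
begin

lemma x_nonzero: "x \<noteq> 0" and y_nonzero: "y \<noteq> 0"
  using free_laurent_embedding_nonzero[OF free] by simp_all

lemma commutator_mult_u_0: "commutator x y * u 0 = x"
  using x_nonzero y_nonzero by (simp add: commutator_def u_0 mult.assoc inverse_mult_cancel_left)

sublocale nc_recurrence "commutator x y" u w
proof
  show "commutator x y \<noteq> 0"
    using x_nonzero y_nonzero by (simp add: commutator_def)
  show "w 0 * commutator x y * u 0 = u 0 * w 0"
    using y_nonzero by (simp add: mult.assoc commutator_mult_u_0[unfolded mult.assoc]) (simp add: u_0 w_0 mult.assoc)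
qed (fact commutator_rec_even commutator_rec_odd)+

lemma u_Suc_0: "u (Suc 0) = inverse x + y * inverse x"
proof -
  have "u (Suc 0) * (commutator x y * u 0) = 1 + y"
    using commutator_rec_even[of 0] by (simp add: w_0 mult.assoc)
  then have "u (Suc 0) * x = 1 + y"
    by (simp only: commutator_mult_u_0)
  have "u (Suc 0) = u (Suc 0) * x * inverse x"
    using x_nonzero by (simp add: mult.assoc)
  also have "\<dots> = inverse x + y * inverse x"
    using \<open>u (Suc 0) * x = 1 + y\<close> by (simp add: distrib_right)
  finally show ?thesis .
qed

definition lead :: 'a where "lead = y * inverse x * y * inverse x * inverse y"
definition carry :: 'a where "carry = x * x * inverse y"
definition rest :: 'a where
  "rest = inverse x * inverse x * inverse y + inverse x * y * inverse x * inverse y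
     + y * inverse x * inverse x * inverse y"

lemma invariant_0_eq: "invariant 0 = lead + carry + rest"
  unfolding invariant_def lead_def carry_def rest_def using commutator_mult_u_0
  by (simp add: w_0 u_Suc_0 algebra_simps)

lemma commutator_eq_carry_mult_lead: "commutator x y = carry * lead"
  using x_nonzero y_nonzero
  by (simp add: commutator_def carry_def lead_def mult.assoc mult_inverse_cancel_left
      inverse_mult_cancel_left)

lemma positive_laurent_lead: "positive_laurent x y lead"
  and positive_laurent_carry: "positive_laurent x y carry"
  and positive_laurent_rest: "positive_laurent x y rest"
  unfolding lead_def carry_def rest_def
  by (intro positive_laurent_add positive_laurent_mult positive_laurent_generators)+

lemma w_nonzero_if_positive:
  assumes "positive_laurent x y (u (Suc m))"
  shows "w m \<noteq> 0" and "w (Suc m) \<noteq> 0"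
proof -
  have "positive_laurent x y (1 + u (Suc m) ^ 4)"
    unfolding power4_eq_mult by (intro positive_laurent_add positive_laurent_mult positive_laurent_one assms)
  then have "w (Suc m) * commutator x y * w m \<noteq> 0"
    using positive_laurent_nonzero[OF free] by (simp add: commutator_rec_odd)
  then show "w m \<noteq> 0" and "w (Suc m) \<noteq> 0" by auto
qed

lemma nonzero_if_positive:
  assumes "\<forall>m\<le>Suc n. positive_laurent x y (u m)"
  shows "\<forall>m\<le>Suc n. u m \<noteq> 0 \<and> w m \<noteq> 0"
proof (intro allI impI conjI)
  fix m assume m: "m \<le> Suc n"
  then show "u m \<noteq> 0"
    using assms positive_laurent_nonzero[OF free] by simp
  show "w m \<noteq> 0"
  proof (cases m)
    case 0
    then show ?thesis using assms w_nonzero_if_positive(1)[of 0] by simp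
  next
    case (Suc k)
    then show ?thesis using assms m w_nonzero_if_positive(2)[of k] by simp
  qed
qed

lemma positive_prefix:
  "(\<forall>m\<le>Suc n. positive_laurent x y (u m)) \<and>
   (\<exists>D. positive_laurent x y D \<and> u (Suc n) = lead * u n + D)"
proof (induction n)
  case 0
  have "u (Suc 0) = lead * u 0 + inverse x"
    using x_nonzero y_nonzero by (simp add: lead_def u_0 u_Suc_0 mult.assoc inverse_mult_cancel_left)
  moreover have "positive_laurent x y (u 0)" "positive_laurent x y (u (Suc 0))"
    unfolding u_0 u_Suc_0 by (intro positive_laurent_add positive_laurent_mult positive_laurent_generators)+
  ultimately show ?case
    using positive_laurent_generators(3) by (auto simp: le_Suc_eq)
next
  case (Suc n)
  then obtain D where D: "positive_laurent x y D" and step: "u (Suc n) = lead * u n + D"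
    and prefix: "\<forall>m\<le>Suc n. positive_laurent x y (u m)"
    by blast
  have "u (Suc (Suc n)) + commutator x y * u n = invariant 0 * u (Suc n)"
    using linear_recurrence nonzero_if_positive[OF prefix] by blast
  then have "u (Suc (Suc n)) + carry * lead * u n = (lead + carry + rest) * u (Suc n)"
    unfolding invariant_0_eq by (simp only: commutator_eq_carry_mult_lead)
  then have next_step: "u (Suc (Suc n)) = lead * u (Suc n) + (rest * u (Suc n) + carry * D)"
    using split_linear_recurrence step by blast
  have u_Suc: "positive_laurent x y (u (Suc n))"
    using prefix by simp
  have remainder: "positive_laurent x y (rest * u (Suc n) + carry * D)"
    by (intro positive_laurent_add positive_laurent_mult positive_laurent_rest positive_laurent_carry u_Suc D)
  moreover have "positive_laurent x y (u (Suc (Suc n)))"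
    unfolding next_step by (intro positive_laurent_add positive_laurent_mult positive_laurent_lead u_Suc remainder)
  ultimately show ?case
    using prefix next_step by (auto simp: le_Suc_eq)
qed

lemma positive_laurent_u: "positive_laurent x y (u n)"
  using positive_prefix[of n] by simp

end

theorem corollary4p4:
  fixes x y :: "'a::division_ring" and R :: "int \<Rightarrow> 'a"
  assumes emb: "free_laurent_embedding x y"
    and rec_even: "\<forall>n. R (2*n) * commutator x y * R (2*n - 2) = 1 + R (2*n - 1)"
    and rec_odd: "\<forall>n. R (2*n + 1) * commutator x y * R (2*n - 1) = 1 + R (2*n) ^ 4"
    and init0: "R 0 = y * x * inverse y"
    and init1: "R 1 = y"
  shows "\<forall>n::int. n \<ge> 0 \<longrightarrow> nonneg_laurent x y (R (2*n))"
proof -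
  define u where "u n = R (2 * int n)" for n
  define w where "w n = R (2 * int n + 1)" for n
  have index: "2 * int (Suc n) - 2 = 2 * int n" "2 * int (Suc n) - 1 = 2 * int n + 1" for n
    by simp_all
  interpret laurent_recurrence x y u w
  proof
    show "u (Suc n) * commutator x y * u n = 1 + w n" for n
      using rec_even[rule_format, of "int (Suc n)"] by (simp only: index u_def w_def)
    show "w (Suc n) * commutator x y * w n = 1 + u (Suc n) ^ 4" for n
      using rec_odd[rule_format, of "int (Suc n)"] by (simp only: index u_def w_def)
  qed (use emb init0 init1 in \<open>simp_all add: u_def w_def\<close>)
  show ?thesis
  proof (intro allI impI)
    fix n :: int
    assume "n \<ge> 0"
    then have "R (2 * n) = u (nat n)"
      by (simp add: u_def)
    then show "nonneg_laurent x y (R (2 * n))"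
      using positive_laurent_imp_nonneg_laurent[OF positive_laurent_u] by simp
  qed
qed

end
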